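(* Consider a wireless network in $\mathbb{R}^2$ in which a typical actuator is located at the origin and is served by a typical controller at fixed distance $r_0>0$. The other controllers form a homogeneous Poisson point process $\Phi$ of density $\lambda>0$. In block $k$, with $P_{{\rm O}_{k-1}}\in[0,1]$ and access probabilities $\delta_{{\rm B}_k},\delta_{{\rm S}_k},\delta_{{\rm C}_k}\in[0,1]$, each controller of $\Phi$ is, independently of the others, in one of three access modes: - block-access mode $\Phi_{\rm B}$, with probability $(1-P_{{\rm O}_{k-1}})\delta_{{\rm B}_k}$, transmitting in every slot of block $k$; - slot-access mode $\Phi_{\rm S}$, with probability $(1-P_{{\rm O}_{k-1}})(1-\delta_{{\rm B}_k})$, transmitting in each slot independently with probability $\delta_{{\rm S}_k}$; - post-controllability mode $\Phi_{\rm C}$, with probability $P_{{\rm O}_{k-1}}$, transmitting in each slot independently with probability $\delta_{{\rm C}_k}$. Define $$\lambda_{{\rm B}_k}=(1-P_{{\rm O}_{k-1}})\delta_{{\rm B}_k}\lambda,\qquad \lambda_{{\rm S}_k}=(1-P_{{\rm O}_{k-1}})(1-\delta_{{\rm B}_k})\delta_{{\rm S}_k}\lambda,\qquad \lambda_{{\rm C}_k}=P_{{\rm O}_{k-1}}\delta_{{\rm C}_k}\lambda,$$ and set $\lambda_{\rm eff}=\lambda_{{\rm B}_k}+\lambda_{{\rm S}_k}+\lambda_{{\rm C}_k}$. In a slot $t$ of block $k$, let $\mathbb{I}_j(S_t)\in\{0,1\}$ indicate that controller $j$ transmits. The SINR at the typical actuator is $$\Upsilon(t)=\frac{\mathbb{I}_0(S_t)\,\xi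 |h_0(t)|^2 r_0^{-\alpha}}{N_o+\sum_{j\in\Phi\setminus\{0\}}\mathbb{I}_j(S_t)\,\xi|h_j(t)|^2 r_j^{-\alpha}},$$ where: - $\xi>0$ is the transmit power and $N_o\ge 0$ the noise power; - $\alpha>0$ is the path-loss exponent; - $r_j$ is the distance from controller $j$ to the origin; - the fading powers $|h_j(t)|^2$ are i.i.d. exponential with mean $1$, independent of everything else. Let $\gamma>0$. Then, for any access mode $\phi\in\{\Phi_{\rm B},\Phi_{\rm S},\Phi_{\rm C}\}$ of the typical controller, the conditional success probability $\varrho_k=\mathbb{P}(\Upsilon(t)>\gamma\mid \mathbb{I}_0(S_t)=1,\phi)$ does not depend on $\phi$, and $$\varrho_k=\exp\Big(-\frac{\gamma N_o}{\xi r_0^{-\alpha}}\Big)\exp\Big(-2\pi\lambda_{\rm eff}\int_0^\infty \frac{\gamma r^{-\alpha}}{r_0^{-\alpha}+\gamma r^{-\alpha}}\,r\,dr\Big).$$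
   Context: The typical controller–actuator pair is placed at the origin by Slivnyak's theorem, so the remaining controllers still form a homogeneous PPP of density $\lambda$. The quantity $P_{{\rm O}_{k-1}}$ is the probability that a controller has achieved block controllability by the end of block $k-1$. It serves here only as a given number in $[0,1]$ determining the fractions of controllers in each access mode. *)

theory Defs
  imports "HOL-Probability.Probability"
begin

datatype access_mode = BlockAccess | SlotAccess | PostCtrl

definition mode_pmf :: "real \<Rightarrow> real \<Rightarrow> access_mode pmf" where
  "mode_pmf PO dB =
     bind_pmf (bernoulli_pmf PO) (\<lambda>c. if c then return_pmf PostCtrl
        else map_pmf (\<lambda>b. if b then BlockAccess else SlotAccess) (bernoulli_pmf dB))"

definition tx_pmf :: "real \<Rightarrow> real \<Rightarrow> access_mode \<Rightarrow> bool pmf" where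
  "tx_pmf dS dC m = (case m of BlockAccess \<Rightarrow> return_pmf True
                              | SlotAccess \<Rightarrow> bernoulli_pmf dS
                              | PostCtrl \<Rightarrow> bernoulli_pmf dC)"

definition mark_pmf :: "real \<Rightarrow> real \<Rightarrow> real \<Rightarrow> real \<Rightarrow> (access_mode \<times> bool) pmf" where
  "mark_pmf PO dB dS dC = bind_pmf (mode_pmf PO dB) (\<lambda>m. map_pmf (\<lambda>b. (m, b)) (tx_pmf dS dC m))"

text \<open>Fading power |h|^2: exponential with mean 1.\<close>
definition fading_measure :: "real measure" where
  "fading_measure = density lborel (exponential_density 1)"

text \<open>Mark of a controller in slot t: ((access mode, transmits in slot t), fading power),
  with fading independent of (mode, transmission).\<close>
definition mark_measure :: "real \<Rightarrow> real \<Rightarrow> real \<Rightarrow> real \<Rightarrow> ((access_mode \<times> bool) \<times> real) measure" where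
  "mark_measure PO dB dS dC = measure_pmf (mark_pmf PO dB dS dC) \<Otimes>\<^sub>M fading_measure"

type_synonym mpoint = "(real \<times> real) \<times> ((access_mode \<times> bool) \<times> real)"

definition intensity :: "real \<Rightarrow> real \<Rightarrow> real \<Rightarrow> real \<Rightarrow> real \<Rightarrow> mpoint measure" where
  "intensity lam PO dB dS dC =
     density (lborel \<Otimes>\<^sub>M mark_measure PO dB dS dC) (\<lambda>_. ennreal lam)"

text \<open>Poisson point process with intensity measure mu, realised as a random (simple) set of points.\<close>
definition poisson_process :: "'w measure \<Rightarrow> 'p measure \<Rightarrow> ('w \<Rightarrow> 'p set) \<Rightarrow> bool" where
  "poisson_process M mu P \<longleftrightarrow> prob_space M \<and>
     (\<forall>\<omega>\<in>space M. P \<omega> \<subseteq> space mu) \<and>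
     (\<forall>A\<in>sets mu. emeasure mu A < \<infinity> \<longrightarrow>
        (AE \<omega> in M. finite (P \<omega> \<inter> A)) \<and>
        (\<lambda>\<omega>. card (P \<omega> \<inter> A)) \<in> measurable M (count_space UNIV) \<and>
        (\<forall>n. measure M {\<omega>\<in>space M. card (P \<omega> \<inter> A) = n} =
              exp (- enn2real (emeasure mu A)) * enn2real (emeasure mu A) ^ n / fact n)) \<and>
     (\<forall>(I :: nat set) (A :: nat \<Rightarrow> 'p set). finite I \<longrightarrow>
        (\<forall>i\<in>I. A i \<in> sets mu \<and> emeasure mu (A i) < \<infinity>) \<longrightarrow> disjoint_family_on A I \<longrightarrow>
        prob_space.indep_vars M (\<lambda>_. count_space UNIV) (\<lambda>i \<omega>. card (P \<omega> \<inter> A i)) I)"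

definition interference :: "real \<Rightarrow> real \<Rightarrow> mpoint set \<Rightarrow> ennreal" where
  "interference xi alpha S =
     (SUP F\<in>{F. finite F \<and> F \<subseteq> S}. \<Sum>p\<in>F.
        (case p of (x, ((m, b), h)) \<Rightarrow> if b then ennreal (xi * h * norm x powr (- alpha)) else 0))"

definition lamB :: "real \<Rightarrow> real \<Rightarrow> real \<Rightarrow> real" where
  "lamB lam PO dB = (1 - PO) * dB * lam"
definition lamS :: "real \<Rightarrow> real \<Rightarrow> real \<Rightarrow> real \<Rightarrow> real" where
  "lamS lam PO dB dS = (1 - PO) * (1 - dB) * dS * lam"
definition lamC :: "real \<Rightarrow> real \<Rightarrow> real \<Rightarrow> real" where
  "lamC lam PO dC = PO * dC * lam"
definition lam_eff :: "real \<Rightarrow> real \<Rightarrow> real \<Rightarrow> real \<Rightarrow> real \<Rightarrow> real" where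
  "lam_eff lam PO dB dS dC = lamB lam PO dB + lamS lam PO dB dS + lamC lam PO dC"

end

theory Submission
  imports Defs
begin

text \<open>
  Conditionally on the typical link being active in a given mode, success means
  \<open>|h\<^sub>0|\<^sup>2 > c (N\<^sub>o + I)\<close> with \<open>c = \<gamma> r\<^sub>0\<^sup>\<alpha> / \<xi>\<close>. The fading power \<open>|h\<^sub>0|\<^sup>2\<close> is
  exponential and independent of the interferers, so the success probability is
  \<open>exp (- c N\<^sub>o) E[exp (- c I)]\<close>, while the probability of the conditioning event is a common
  factor that cancels; this is why the result does not depend on the access mode.
  The interference \<open>I\<close> is a sum over an independently marked Poisson process, whose Laplace
  functional gives \<open>E[exp (- c I)] = exp (- \<integral> (1 - exp (- c w)) d\<Lambda>)\<close> for the intensity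
  \<open>\<Lambda>\<close> and the per-point interference \<open>w\<close>. Averaging over the exponential fading mark turns
  \<open>1 - exp (- c w)\<close> into \<open>c w / (1 + c w)\<close>, averaging over the access and transmission marks
  thins the density to \<^const>\<open>lam_eff\<close>, and polar coordinates in the plane give the
  factor \<open>2 \<pi> r\<close>.
\<close>

definition exp_neg_ennreal :: "ennreal \<Rightarrow> real" where
  "exp_neg_ennreal x = (if x = \<infinity> then 0 else exp (- enn2real x))"

lemma exp_neg_ennreal_nonneg: "0 \<le> exp_neg_ennreal x"
  by (simp add: exp_neg_ennreal_def)

lemma exp_neg_ennreal_le_1: "exp_neg_ennreal x \<le> 1"
  by (simp add: exp_neg_ennreal_def)

lemma exp_neg_ennreal_ennreal [simp]: "0 \<le> x \<Longrightarrow> exp_neg_ennreal (ennreal x) = exp (- x)"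
  by (simp add: exp_neg_ennreal_def)

lemma exp_neg_ennreal_top [simp]: "exp_neg_ennreal top = 0"
  by (simp add: exp_neg_ennreal_def flip: infinity_ennreal_def)

lemma exp_neg_ennreal_add: "exp_neg_ennreal (x + y) = exp_neg_ennreal x * exp_neg_ennreal y"
  by (cases x; cases y) (simp_all add: ennreal_plus[symmetric] exp_add[symmetric] del: ennreal_plus)

lemma borel_measurable_exp_neg_ennreal [measurable]: "exp_neg_ennreal \<in> borel_measurable borel"
  unfolding exp_neg_ennreal_def by measurable

lemma exp_neg_ennreal_antimono: "ennreal b \<le> x \<Longrightarrow> 0 \<le> b \<Longrightarrow> exp_neg_ennreal x \<le> exp (- b)"
  by (cases x) (auto simp: exp_neg_ennreal_def)

lemma tendsto_exp_neg_ennreal: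
  fixes x :: "nat \<Rightarrow> ennreal"
  assumes "x \<longlonglongrightarrow> y"
  shows "(\<lambda>n. exp_neg_ennreal (x n)) \<longlonglongrightarrow> exp_neg_ennreal y"
proof (cases "y = \<infinity>")
  case False
  then have "eventually (\<lambda>n. x n < \<infinity>) sequentially"
    using order_tendstoD(2)[OF assms] by (simp add: top.not_eq_extremum)
  then have "eventually (\<lambda>n. exp (- enn2real (x n)) = exp_neg_ennreal (x n)) sequentially"
    by eventually_elim (simp add: exp_neg_ennreal_def)
  moreover have "(\<lambda>n. exp (- enn2real (x n))) \<longlonglongrightarrow> exp (- enn2real y)"
    using False assms by (intro tendsto_intros tendsto_enn2real) (simp_all add: less_top)
  ultimately show ?thesis
    using False by (simp add: exp_neg_ennreal_def Lim_transform_eventually)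
next
  case True
  show ?thesis
  proof (rule order_tendstoI)
    fix a assume "exp_neg_ennreal y < a"
    then have a: "0 < a" using True by simp
    define b where "b = \<bar>ln a\<bar> + 1"
    have "eventually (\<lambda>n. ennreal b < x n) sequentially"
      using order_tendstoD(1)[OF assms] True by simp
    then show "eventually (\<lambda>n. exp_neg_ennreal (x n) < a) sequentially"
    proof eventually_elim
      case (elim n)
      have "exp_neg_ennreal (x n) \<le> exp (- b)"
        using elim by (intro exp_neg_ennreal_antimono) (simp_all add: b_def)
      also have "exp (- b) < exp (ln a)" by (simp add: b_def)
      finally show ?case using a by simp
    qed
  qed (use True exp_neg_ennreal_nonneg in \<open>auto intro: always_eventually less_le_trans\<close>)
qed

lemma infsum_ennreal_eq_SUP:
  "(\<Sum>\<^sub>\<infinity>x\<in>A. f x :: ennreal) = (SUP F\<in>{F. finite F \<and> F \<subseteq> A}. sum f F)"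
  by (rule nonneg_infsum_complete) simp

lemma infsum_ennreal_cmult: "(\<Sum>\<^sub>\<infinity>x\<in>A. c * f x :: ennreal) = c * (\<Sum>\<^sub>\<infinity>x\<in>A. f x)"
  by (simp add: infsum_ennreal_eq_SUP SUP_mult_left_ennreal sum_distrib_left)

lemma infsum_ennreal_SUP:
  fixes f :: "nat \<Rightarrow> 'a \<Rightarrow> ennreal"
  assumes "\<And>x. x \<in> A \<Longrightarrow> incseq (\<lambda>n. f n x)"
  shows "(\<Sum>\<^sub>\<infinity>x\<in>A. SUP n. f n x) = (SUP n. \<Sum>\<^sub>\<infinity>x\<in>A. f n x)"
proof -
  have "(\<Sum>\<^sub>\<infinity>x\<in>A. SUP n. f n x) = (SUP F\<in>{F. finite F \<and> F \<subseteq> A}. SUP n. \<Sum>x\<in>F. f n x)"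
    unfolding infsum_ennreal_eq_SUP using assms by (intro SUP_cong refl ennreal_SUP_sum[symmetric]) auto
  also have "\<dots> = (SUP n. \<Sum>\<^sub>\<infinity>x\<in>A. f n x)"
    unfolding infsum_ennreal_eq_SUP by (rule SUP_commute)
  finally show ?thesis .
qed

section \<open>The Laplace functional of a Poisson process\<close>

lemma poisson_process_prob_space: "poisson_process M mu P \<Longrightarrow> prob_space M"
  by (simp add: poisson_process_def)

lemma poisson_process_subset_space: "poisson_process M mu P \<Longrightarrow> \<omega> \<in> space M \<Longrightarrow> P \<omega> \<subseteq> space mu"
  by (simp add: poisson_process_def)

lemma poisson_process_counts:
  assumes "poisson_process M mu P" "A \<in> sets mu" "emeasure mu A < \<infinity>"
  shows poisson_process_finite_AE: "AE \<omega> in M. finite (P \<omega> \<inter> A)"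
    and poisson_process_count_measurable: "(\<lambda>\<omega>. card (P \<omega> \<inter> A)) \<in> measurable M (count_space UNIV)"
    and poisson_process_count_distribution:
      "measure M {\<omega>\<in>space M. card (P \<omega> \<inter> A) = n} =
         exp (- enn2real (emeasure mu A)) * enn2real (emeasure mu A) ^ n / fact n"
  using assms unfolding poisson_process_def by simp_all

lemma poisson_process_indep_counts:
  fixes I :: "nat set"
  assumes "poisson_process M mu P" "finite I" "\<And>i. i \<in> I \<Longrightarrow> A i \<in> sets mu"
    "\<And>i. i \<in> I \<Longrightarrow> emeasure mu (A i) < \<infinity>" "disjoint_family_on A I"
  shows "prob_space.indep_vars M (\<lambda>_. count_space UNIV) (\<lambda>i \<omega>. card (P \<omega> \<inter> A i)) I"
  using assms unfolding poisson_process_def by (elim conjE) simp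

lemma poisson_pgf:
  fixes N :: "'w \<Rightarrow> nat"
  assumes "prob_space M" and N: "N \<in> measurable M (count_space UNIV)"
    and dist: "\<And>n. measure M {\<omega>\<in>space M. N \<omega> = n} = exp (- m) * m ^ n / fact n"
    and "0 \<le> m"
  shows "(\<integral>\<^sup>+\<omega>. ennreal (exp (- (c * real (N \<omega>)))) \<partial>M) = ennreal (exp (- (m * (1 - exp (- c)))))"
proof -
  interpret prob_space M by fact
  have [measurable]: "{\<omega>\<in>space M. N \<omega> = n} \<in> sets M" for n
    using N by measurable
  have series: "(\<lambda>n. exp (- (c * real n)) * (exp (- m) * m ^ n / fact n)) sums exp (- (m * (1 - exp (- c))))"
  proof -
    have "(\<lambda>n. exp (- m) * ((m * exp (- c)) ^ n /\<^sub>R fact n)) sums (exp (- m) * exp (m * exp (- c)))"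
      by (intro sums_mult exp_converges)
    moreover have "exp (- m) * exp (m * exp (- c)) = exp (- (m * (1 - exp (- c))))"
      by (simp add: algebra_simps flip: exp_add)
    moreover have "exp (- m) * ((m * exp (- c)) ^ n /\<^sub>R fact n) = exp (- (c * real n)) * (exp (- m) * m ^ n / fact n)" for n
      by (simp add: power_mult_distrib exp_of_nat_mult[symmetric] field_simps)
    ultimately show ?thesis by simp
  qed
  have "(\<integral>\<^sup>+\<omega>. ennreal (exp (- (c * real (N \<omega>)))) \<partial>M)
      = (\<integral>\<^sup>+\<omega>. (\<Sum>n. ennreal (exp (- (c * real n))) * indicator {\<omega>\<in>space M. N \<omega> = n} \<omega>) \<partial>M)"
  proof (intro nn_integral_cong)
    fix \<omega> assume "\<omega> \<in> space M"
    then show "ennreal (exp (- (c * real (N \<omega>))))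
        = (\<Sum>n. ennreal (exp (- (c * real n))) * indicator {\<omega>\<in>space M. N \<omega> = n} \<omega>)"
      by (subst suminf_finite[where N="{N \<omega>}"]) (auto split: split_indicator)
  qed
  also have "\<dots> = (\<Sum>n. \<integral>\<^sup>+\<omega>. ennreal (exp (- (c * real n))) * indicator {\<omega>\<in>space M. N \<omega> = n} \<omega> \<partial>M)"
    by (intro nn_integral_suminf) measurable
  also have "\<dots> = (\<Sum>n. ennreal (exp (- (c * real n)) * (exp (- m) * m ^ n / fact n)))"
    using \<open>0 \<le> m\<close>
    by (simp add: nn_integral_cmult_indicator emeasure_eq_measure dist flip: ennreal_mult)
  also have "\<dots> = ennreal (exp (- (m * (1 - exp (- c)))))"
    using \<open>0 \<le> m\<close> sums_summable[OF series] sums_unique[OF series]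
    by (subst suminf_ennreal2) simp_all
  finally show ?thesis .
qed

lemma poisson_process_nn_integral_exp_counts:
  fixes I :: "nat set"
  assumes pp: "poisson_process M mu P" and "finite I"
    and A: "\<And>i. i \<in> I \<Longrightarrow> A i \<in> sets mu" "\<And>i. i \<in> I \<Longrightarrow> emeasure mu (A i) < \<infinity>"
    and "disjoint_family_on A I"
  shows "(\<integral>\<^sup>+\<omega>. ennreal (exp (- (\<Sum>i\<in>I. c i * real (card (P \<omega> \<inter> A i))))) \<partial>M)
       = ennreal (exp (- (\<Sum>i\<in>I. enn2real (emeasure mu (A i)) * (1 - exp (- c i)))))"
proof -
  interpret prob_space M using pp by (rule poisson_process_prob_space)
  have "(\<integral>\<^sup>+\<omega>. ennreal (exp (- (\<Sum>i\<in>I. c i * real (card (P \<omega> \<inter> A i))))) \<partial>M)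
      = (\<integral>\<^sup>+\<omega>. (\<Prod>i\<in>I. ennreal (exp (- (c i * real (card (P \<omega> \<inter> A i)))))) \<partial>M)"
    by (simp add: prod_ennreal exp_sum \<open>finite I\<close> sum_negf[symmetric])
  also have "\<dots> = (\<Prod>i\<in>I. \<integral>\<^sup>+\<omega>. ennreal (exp (- (c i * real (card (P \<omega> \<inter> A i))))) \<partial>M)"
    using poisson_process_indep_counts[OF assms]
    by (intro indep_vars_nn_integral \<open>finite I\<close> indep_vars_compose2[where Y="\<lambda>i n. ennreal (exp (- (c i * real n)))"]) auto
  also have "\<dots> = (\<Prod>i\<in>I. ennreal (exp (- (enn2real (emeasure mu (A i)) * (1 - exp (- c i))))))"
    using A by (intro prod.cong refl poisson_pgf prob_space_axioms poisson_process_counts[OF pp]) simp_all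
  also have "\<dots> = ennreal (exp (- (\<Sum>i\<in>I. enn2real (emeasure mu (A i)) * (1 - exp (- c i)))))"
    by (simp add: prod_ennreal exp_sum \<open>finite I\<close> sum_negf[symmetric])
  finally show ?thesis .
qed

lemma level_set_in_sets:
  assumes "B \<in> sets mu" "k \<in> measurable mu (count_space UNIV)"
  shows "{p \<in> B. k p = i} \<in> sets mu"
proof -
  have "{p \<in> B. k p = i} = B \<inter> (k -` {i} \<inter> space mu)"
    using sets.sets_into_space[OF assms(1)] by auto
  then show ?thesis
    using assms measurable_sets[OF assms(2), of "{i}"] by auto
qed

lemma poisson_process_infsum_simple_AE:
  fixes k :: "'p \<Rightarrow> nat"
  assumes pp: "poisson_process M mu P" and "finite I" and "\<And>p. k p \<in> I"
    and "B \<in> sets mu" "emeasure mu B < \<infinity>" and "\<And>i. i \<in> I \<Longrightarrow> 0 \<le> c i"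
  shows "AE \<omega> in M. (\<Sum>\<^sub>\<infinity>p\<in>P \<omega>. ennreal (c (k p) * indicator B p))
                      = ennreal (\<Sum>i\<in>I. c i * real (card (P \<omega> \<inter> {p \<in> B. k p = i})))"
  using poisson_process_finite_AE[OF pp assms(4,5)]
proof eventually_elim
  case (elim \<omega>)
  have "(\<Sum>\<^sub>\<infinity>p\<in>P \<omega>. ennreal (c (k p) * indicator B p)) = (\<Sum>p\<in>P \<omega> \<inter> B. ennreal (c (k p)))"
    using elim by (subst infsum_cong_neutral[where T="P \<omega> \<inter> B"]) auto
  also have "\<dots> = ennreal (\<Sum>p\<in>P \<omega> \<inter> B. c (k p))"
    using assms(3,6) by (simp add: sum_ennreal)
  also have "(\<Sum>p\<in>P \<omega> \<inter> B. c (k p)) = (\<Sum>i\<in>I. \<Sum>p\<in>{p \<in> P \<omega> \<inter> B. k p = i}. c (k p))"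
    using elim assms(2,3) by (intro sum.group[symmetric]) auto
  also have "\<dots> = (\<Sum>i\<in>I. c i * real (card (P \<omega> \<inter> {p \<in> B. k p = i})))"
  proof (intro sum.cong refl)
    fix i
    have "{p \<in> P \<omega> \<inter> B. k p = i} = P \<omega> \<inter> {p \<in> B. k p = i}" by auto
    then show "(\<Sum>p\<in>{p \<in> P \<omega> \<inter> B. k p = i}. c (k p)) = c i * real (card (P \<omega> \<inter> {p \<in> B. k p = i}))"
      by simp
  qed
  finally show ?case .
qed

lemma nn_integral_one_minus_exp_level_sets:
  assumes "finite I" "\<And>p. k p \<in> I" "\<And>i. {p \<in> B. k p = i} \<in> sets mu"
    "\<And>i. emeasure mu {p \<in> B. k p = i} < \<infinity>" "\<And>i. i \<in> I \<Longrightarrow> 0 \<le> c i"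
  shows "(\<integral>\<^sup>+p. ennreal (1 - exp (- (c (k p) * indicator B p))) \<partial>mu)
       = ennreal (\<Sum>i\<in>I. enn2real (emeasure mu {p \<in> B. k p = i}) * (1 - exp (- c i)))"
proof -
  have "ennreal (1 - exp (- (c (k p) * indicator B p)))
      = (\<Sum>i\<in>I. ennreal (1 - exp (- c i)) * indicator {p \<in> B. k p = i} p)" for p
    using assms(1) assms(2)[of p] by (auto simp: indicator_def if_distrib sum.delta cong: if_cong)
  then have "(\<integral>\<^sup>+p. ennreal (1 - exp (- (c (k p) * indicator B p))) \<partial>mu)
      = (\<Sum>i\<in>I. ennreal (1 - exp (- c i)) * emeasure mu {p \<in> B. k p = i})"
    using assms(3) by (simp add: nn_integral_sum nn_integral_cmult_indicator)
  also have "\<dots> = ennreal (\<Sum>i\<in>I. enn2real (emeasure mu {p \<in> B. k p = i}) * (1 - exp (- c i)))"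
    using assms(4,5)
    by (subst sum_ennreal[symmetric]) (auto simp: ennreal_mult less_top mult.commute intro!: sum.cong)
  finally show ?thesis .
qed

lemma poisson_process_laplace_simple:
  fixes I :: "nat \<Rightarrow> nat set" and k :: "nat \<Rightarrow> 'p \<Rightarrow> nat"
  assumes pp: "poisson_process M mu P" and I: "\<And>n. finite (I n)"
    and k: "\<And>n. k n \<in> measurable mu (count_space UNIV)" "\<And>n p. k n p \<in> I n"
    and B: "\<And>n. B n \<in> sets mu" "\<And>n. emeasure mu (B n) < \<infinity>" and c: "\<And>n i. i \<in> I n \<Longrightarrow> 0 \<le> c n i"
  obtains S where "\<And>n. S n \<in> borel_measurable M" "\<And>n \<omega>. 0 \<le> S n \<omega>"
    and "\<And>n. AE \<omega> in M. (\<Sum>\<^sub>\<infinity>p\<in>P \<omega>. ennreal (c n (k n p) * indicator (B n) p)) = ennreal (S n \<omega>)"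
    and "\<And>n. (\<integral>\<omega>. exp (- S n \<omega>) \<partial>M)
      = exp_neg_ennreal (\<integral>\<^sup>+p. ennreal (1 - exp (- (c n (k n p) * indicator (B n) p))) \<partial>mu)"
proof -
  interpret prob_space M using pp by (rule poisson_process_prob_space)
  define A where "A n i = {p \<in> B n. k n p = i}" for n i
  define S where "S n \<omega> = (\<Sum>i\<in>I n. c n i * real (card (P \<omega> \<inter> A n i)))" for n \<omega>
  define V where "V n = (\<Sum>i\<in>I n. enn2real (emeasure mu (A n i)) * (1 - exp (- c n i)))" for n
  have A_sets [measurable]: "A n i \<in> sets mu" for n i
    unfolding A_def using B(1) k(1) by (rule level_set_in_sets)
  have A_finite: "emeasure mu (A n i) < \<infinity>" for n i
    using B by (auto simp: A_def intro: order_le_less_trans[OF emeasure_mono])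
  have A_disjoint: "disjoint_family_on (A n) (I n)" for n
    by (auto simp: disjoint_family_on_def A_def)
  have S_measurable: "S n \<in> borel_measurable M" for n
    using poisson_process_count_measurable[OF pp A_sets A_finite] unfolding S_def by measurable
  have S_nonneg: "0 \<le> S n \<omega>" for n \<omega>
    using c by (auto simp: S_def intro!: sum_nonneg)
  have V_nonneg: "0 \<le> V n" for n
    using c by (auto simp: V_def intro!: sum_nonneg)
  have "ennreal (\<integral>\<omega>. exp (- S n \<omega>) \<partial>M) = (\<integral>\<^sup>+\<omega>. ennreal (exp (- S n \<omega>)) \<partial>M)" for n
    using S_nonneg S_measurable
    by (intro nn_integral_eq_integral[symmetric] integrable_const_bound[where B=1]) auto
  also have "\<dots> n = ennreal (exp (- V n))" for n
    unfolding S_def V_def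
    by (rule poisson_process_nn_integral_exp_counts[OF pp I A_sets A_finite A_disjoint])
  finally have "(\<integral>\<omega>. exp (- S n \<omega>) \<partial>M) = exp (- V n)" for n
    by (simp add: integral_nonneg_AE)
  moreover have "(\<integral>\<^sup>+p. ennreal (1 - exp (- (c n (k n p) * indicator (B n) p))) \<partial>mu) = ennreal (V n)" for n
    unfolding V_def A_def using A_sets A_finite
    by (intro nn_integral_one_minus_exp_level_sets[OF I k(2)] c) (simp_all add: A_def)
  moreover have "AE \<omega> in M. (\<Sum>\<^sub>\<infinity>p\<in>P \<omega>. ennreal (c n (k n p) * indicator (B n) p)) = ennreal (S n \<omega>)" for n
    unfolding S_def A_def by (rule poisson_process_infsum_simple_AE[OF pp I k(2) B c])
  ultimately show thesis
    using S_measurable S_nonneg V_nonneg by (intro that[of S]) simp_all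
qed

definition dyadic_level :: "nat \<Rightarrow> real \<Rightarrow> nat" where
  "dyadic_level n y = min (n * 2 ^ n) (nat \<lfloor>2 ^ n * y\<rfloor>)"

lemma dyadic_level_le: "dyadic_level n y \<le> n * 2 ^ n"
  by (simp add: dyadic_level_def)

lemma measurable_dyadic_level [measurable]:
  "g \<in> borel_measurable M \<Longrightarrow> (\<lambda>x. dyadic_level n (g x)) \<in> measurable M (count_space UNIV)"
  unfolding dyadic_level_def by measurable

lemma dyadic_level_incseq:
  assumes "0 \<le> y"
  shows "incseq (\<lambda>n. real (dyadic_level n y) / 2 ^ n)"
proof (rule incseq_SucI)
  fix n
  have "2 * \<lfloor>2 ^ n * y\<rfloor> \<le> \<lfloor>2 * (2 ^ n * y)\<rfloor>"
    by (simp add: le_floor_iff)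
  then have "2 * nat \<lfloor>2 ^ n * y\<rfloor> \<le> nat \<lfloor>2 ^ Suc n * y\<rfloor>"
    using assms by (simp add: nat_mult_distrib[symmetric] mult.assoc)
  then have "2 * dyadic_level n y \<le> dyadic_level (Suc n) y"
    unfolding dyadic_level_def by (simp add: min_def)
  then have "real (2 * dyadic_level n y) / 2 ^ Suc n \<le> real (dyadic_level (Suc n) y) / 2 ^ Suc n"
    by (intro divide_right_mono) simp_all
  then show "real (dyadic_level n y) / 2 ^ n \<le> real (dyadic_level (Suc n) y) / 2 ^ Suc n"
    by simp
qed

lemma dyadic_level_tendsto:
  assumes "0 \<le> y"
  shows "(\<lambda>n. real (dyadic_level n y) / 2 ^ n) \<longlonglongrightarrow> y"
proof (rule tendsto_sandwich)
  obtain N :: nat where "y \<le> real N" using real_arch_simple by blast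
  have "y - (1 / 2) ^ n \<le> real (dyadic_level n y) / 2 ^ n \<and> real (dyadic_level n y) / 2 ^ n \<le> y"
    if "N \<le> n" for n
  proof -
    have "2 ^ n * y \<le> real (n * 2 ^ n)"
      using \<open>y \<le> real N\<close> that by (simp add: mult.commute mult_left_mono order_trans[of y "real N" "real n"])
    then have "\<lfloor>2 ^ n * y\<rfloor> \<le> \<lfloor>real (n * 2 ^ n)\<rfloor>"
      by (rule floor_mono)
    then have "nat \<lfloor>2 ^ n * y\<rfloor> \<le> n * 2 ^ n"
      by (simp only: floor_of_nat nat_le_iff)
    then have "dyadic_level n y = nat \<lfloor>2 ^ n * y\<rfloor>"
      by (simp add: dyadic_level_def)
    then have level: "real (dyadic_level n y) = real_of_int \<lfloor>2 ^ n * y\<rfloor>"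
      using assms by simp
    have "y - (1 / 2) ^ n = (2 ^ n * y - 1) / 2 ^ n"
      by (simp add: field_simps power_divide)
    also have "\<dots> \<le> real_of_int \<lfloor>2 ^ n * y\<rfloor> / 2 ^ n"
      by (intro divide_right_mono) (linarith, simp)
    finally show ?thesis
      unfolding level by (simp add: divide_le_eq mult.commute)
  qed
  then show "eventually (\<lambda>n. y - (1 / 2) ^ n \<le> real (dyadic_level n y) / 2 ^ n) sequentially"
    and "eventually (\<lambda>n. real (dyadic_level n y) / 2 ^ n \<le> y) sequentially"
    by (auto simp: eventually_sequentially)
  show "(\<lambda>n. y - (1 / 2) ^ n) \<longlonglongrightarrow> y"
    using tendsto_diff[OF tendsto_const LIMSEQ_power_zero[of "1 / 2 :: real"]] by simp
qed simp

lemma SUP_ennreal_eq_lim: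
  fixes u :: "nat \<Rightarrow> real"
  assumes "incseq u" "u \<longlonglongrightarrow> l"
  shows "(SUP n. ennreal (u n)) = ennreal l"
  using assms by (intro SUP_Lim tendsto_ennrealI) (auto simp: incseq_def intro: ennreal_leI)

lemma tendsto_infsum_ennreal_incseq:
  fixes G :: "nat \<Rightarrow> 'a \<Rightarrow> real"
  assumes "\<And>p. p \<in> S \<Longrightarrow> incseq (\<lambda>n. G n p)" "\<And>p. p \<in> S \<Longrightarrow> (\<lambda>n. G n p) \<longlonglongrightarrow> g p"
  shows "(\<lambda>n. \<Sum>\<^sub>\<infinity>p\<in>S. ennreal (G n p)) \<longlonglongrightarrow> (\<Sum>\<^sub>\<infinity>p\<in>S. ennreal (g p))"
proof -
  have "(\<Sum>\<^sub>\<infinity>p\<in>S. ennreal (g p)) = (\<Sum>\<^sub>\<infinity>p\<in>S. SUP n. ennreal (G n p))"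
    using assms by (intro infsum_cong SUP_ennreal_eq_lim[symmetric])
  also have "\<dots> = (SUP n. \<Sum>\<^sub>\<infinity>p\<in>S. ennreal (G n p))"
    using assms(1) by (intro infsum_ennreal_SUP) (auto simp: incseq_def intro: ennreal_leI)
  finally have lim: "(\<Sum>\<^sub>\<infinity>p\<in>S. ennreal (g p)) = (SUP n. \<Sum>\<^sub>\<infinity>p\<in>S. ennreal (G n p))" .
  have "incseq (\<lambda>n. \<Sum>\<^sub>\<infinity>p\<in>S. ennreal (G n p))"
    using assms(1)
    by (intro monoI infsum_mono ennreal_leI nonneg_summable_on_complete) (auto dest: monoD)
  then show ?thesis
    unfolding lim by (rule LIMSEQ_SUP)
qed

lemma tendsto_nn_integral_one_minus_exp:
  fixes G :: "nat \<Rightarrow> 'a \<Rightarrow> real"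
  assumes [measurable]: "\<And>n. G n \<in> borel_measurable M"
    and inc: "\<And>p. incseq (\<lambda>n. G n p)" and lim: "\<And>p. p \<in> space M \<Longrightarrow> (\<lambda>n. G n p) \<longlonglongrightarrow> g p"
  shows "(\<lambda>n. \<integral>\<^sup>+p. ennreal (1 - exp (- G n p)) \<partial>M) \<longlonglongrightarrow> (\<integral>\<^sup>+p. ennreal (1 - exp (- g p)) \<partial>M)"
proof -
  have inc': "incseq (\<lambda>n. 1 - exp (- G n p))" for p
    using inc by (auto simp: incseq_def)
  have "(\<integral>\<^sup>+p. ennreal (1 - exp (- g p)) \<partial>M) = (\<integral>\<^sup>+p. (SUP n. ennreal (1 - exp (- G n p))) \<partial>M)"
    using inc' lim by (intro nn_integral_cong SUP_ennreal_eq_lim[symmetric]) (auto intro!: tendsto_intros)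
  also have "\<dots> = (SUP n. \<integral>\<^sup>+p. ennreal (1 - exp (- G n p)) \<partial>M)"
    using inc' by (intro nn_integral_monotone_convergence_SUP) (auto simp: incseq_def le_fun_def intro: ennreal_leI)
  finally show ?thesis
    using inc' by (simp add: LIMSEQ_SUP incseq_def le_fun_def nn_integral_mono ennreal_leI)
qed

lemma dyadic_approx_exhausting:
  assumes "incseq B" "\<And>p. 0 \<le> g p"
  shows dyadic_approx_exhausting_incseq: "incseq (\<lambda>n. real (dyadic_level n (g p)) / 2 ^ n * indicator (B n) p)"
    and dyadic_approx_exhausting_tendsto:
      "p \<in> (\<Union>n. B n) \<Longrightarrow> (\<lambda>n. real (dyadic_level n (g p)) / 2 ^ n * indicator (B n) p) \<longlonglongrightarrow> g p"
proof -
  show "incseq (\<lambda>n. real (dyadic_level n (g p)) / 2 ^ n * indicator (B n) p)"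
  proof (rule monoI)
    fix m n :: nat assume "m \<le> n"
    have "real (dyadic_level m (g p)) / 2 ^ m \<le> real (dyadic_level n (g p)) / 2 ^ n"
      using monoD[OF dyadic_level_incseq[OF assms(2)] \<open>m \<le> n\<close>] .
    moreover have "indicator (B m) p \<le> (indicator (B n) p :: real)"
      using monoD[OF assms(1) \<open>m \<le> n\<close>] by (auto split: split_indicator)
    ultimately show "real (dyadic_level m (g p)) / 2 ^ m * indicator (B m) p
        \<le> real (dyadic_level n (g p)) / 2 ^ n * indicator (B n) p"
      by (intro mult_mono) simp_all
  qed
  assume "p \<in> (\<Union>n. B n)"
  then obtain n0 where "p \<in> B n0" by blast
  then have "\<forall>n\<ge>n0. indicator (B n) p = (1 :: real)"
    using monoD[OF assms(1)] by (auto simp: subset_eq)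
  then have "eventually (\<lambda>n. real (dyadic_level n (g p)) / 2 ^ n
      = real (dyadic_level n (g p)) / 2 ^ n * indicator (B n) p) sequentially"
    unfolding eventually_sequentially by auto
  with dyadic_level_tendsto[OF assms(2)]
  show "(\<lambda>n. real (dyadic_level n (g p)) / 2 ^ n * indicator (B n) p) \<longlonglongrightarrow> g p"
    by (rule Lim_transform_eventually)
qed

text \<open>The sum over the points is approximated by dyadic step functions supported on an
  exhausting sequence of sets of finite intensity; for these the independent Poisson counts give
  the formula, and monotone and dominated convergence pass to the limit.\<close>

lemma poisson_process_laplace:
  assumes pp: "poisson_process M mu P" and "sigma_finite_measure mu"
    and g: "g \<in> borel_measurable mu" "\<And>p. 0 \<le> g p"
    and meas: "(\<lambda>\<omega>. \<Sum>\<^sub>\<infinity>p\<in>P \<omega>. ennreal (g p)) \<in> borel_measurable M"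
  shows "(\<integral>\<omega>. exp_neg_ennreal (\<Sum>\<^sub>\<infinity>p\<in>P \<omega>. ennreal (g p)) \<partial>M)
       = exp_neg_ennreal (\<integral>\<^sup>+p. ennreal (1 - exp (- g p)) \<partial>mu)"
proof -
  interpret prob_space M using pp by (rule poisson_process_prob_space)
  obtain B where B: "range B \<subseteq> sets mu" "(\<Union>n. B n) = space mu" "\<And>n. emeasure mu (B n) \<noteq> \<infinity>" "incseq B"
    using sigma_finite_measure.sigma_finite_incseq[OF assms(2)] by blast
  define G where "G n p = real (dyadic_level n (g p)) / 2 ^ n * indicator (B n) p" for n p
  have G_measurable: "G n \<in> borel_measurable mu" for n
    using B(1) g(1) unfolding G_def by measurable
  have G_incseq: "incseq (\<lambda>n. G n p)" for p
    unfolding G_def by (rule dyadic_approx_exhausting_incseq[OF B(4) g(2)])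
  have G_tendsto: "(\<lambda>n. G n p) \<longlonglongrightarrow> g p" if "p \<in> space mu" for p
    unfolding G_def using that B(2) by (intro dyadic_approx_exhausting_tendsto[OF B(4) g(2)]) auto
  obtain S where S: "\<And>n. S n \<in> borel_measurable M" "\<And>n \<omega>. 0 \<le> S n \<omega>"
    "\<And>n. AE \<omega> in M. (\<Sum>\<^sub>\<infinity>p\<in>P \<omega>. ennreal (G n p)) = ennreal (S n \<omega>)"
    "\<And>n. (\<integral>\<omega>. exp (- S n \<omega>) \<partial>M) = exp_neg_ennreal (\<integral>\<^sup>+p. ennreal (1 - exp (- G n p)) \<partial>mu)"
    unfolding G_def
    by (rule poisson_process_laplace_simple[OF pp, where I="\<lambda>n. {..n * 2 ^ n}"
          and k="\<lambda>n p. dyadic_level n (g p)" and B=B and c="\<lambda>n i. real i / 2 ^ n"])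
       (use B(1,3) g(1) in \<open>auto simp: dyadic_level_le less_top\<close>)
  have "AE \<omega> in M. \<forall>n. (\<Sum>\<^sub>\<infinity>p\<in>P \<omega>. ennreal (G n p)) = ennreal (S n \<omega>)"
    using S(3) by (simp add: AE_all_countable)
  then have "AE \<omega> in M. (\<lambda>n. exp (- S n \<omega>)) \<longlonglongrightarrow> exp_neg_ennreal (\<Sum>\<^sub>\<infinity>p\<in>P \<omega>. ennreal (g p))"
  proof (rule AE_mp[OF _ AE_I2[OF impI]])
    fix \<omega> assume \<omega>: "\<omega> \<in> space M" and S_eq: "\<forall>n. (\<Sum>\<^sub>\<infinity>p\<in>P \<omega>. ennreal (G n p)) = ennreal (S n \<omega>)"
    have "(\<lambda>n. \<Sum>\<^sub>\<infinity>p\<in>P \<omega>. ennreal (G n p)) \<longlonglongrightarrow> (\<Sum>\<^sub>\<infinity>p\<in>P \<omega>. ennreal (g p))"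
      using poisson_process_subset_space[OF pp \<omega>] G_incseq G_tendsto
      by (intro tendsto_infsum_ennreal_incseq) auto
    then have "(\<lambda>n. exp_neg_ennreal (\<Sum>\<^sub>\<infinity>p\<in>P \<omega>. ennreal (G n p)))
        \<longlonglongrightarrow> exp_neg_ennreal (\<Sum>\<^sub>\<infinity>p\<in>P \<omega>. ennreal (g p))"
      by (rule tendsto_exp_neg_ennreal)
    then show "(\<lambda>n. exp (- S n \<omega>)) \<longlonglongrightarrow> exp_neg_ennreal (\<Sum>\<^sub>\<infinity>p\<in>P \<omega>. ennreal (g p))"
      using S_eq S(2) by simp
  qed
  then have "(\<lambda>n. \<integral>\<omega>. exp (- S n \<omega>) \<partial>M) \<longlonglongrightarrow> (\<integral>\<omega>. exp_neg_ennreal (\<Sum>\<^sub>\<infinity>p\<in>P \<omega>. ennreal (g p)) \<partial>M)"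
    using S(1,2) meas by (intro integral_dominated_convergence[where w="\<lambda>_. 1"]) simp_all
  moreover have "(\<lambda>n. exp_neg_ennreal (\<integral>\<^sup>+p. ennreal (1 - exp (- G n p)) \<partial>mu))
      \<longlonglongrightarrow> exp_neg_ennreal (\<integral>\<^sup>+p. ennreal (1 - exp (- g p)) \<partial>mu)"
    using G_measurable G_incseq G_tendsto by (intro tendsto_exp_neg_ennreal tendsto_nn_integral_one_minus_exp)
  ultimately show ?thesis
    unfolding S(4) by (rule LIMSEQ_unique)
qed

section \<open>Polar coordinates and exponential fading\<close>

lemma emeasure_lborel_norm_le:
  "emeasure (lborel :: (real \<times> real) measure) {x. norm x \<le> a} = ennreal (if a < 0 then 0 else pi * a\<^sup>2)"
proof (cases "a < 0")
  case True
  have "\<not> norm x \<le> a" for x :: "real \<times> real"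
    using True norm_ge_zero[of x] by linarith
  then show ?thesis using True by simp
next
  case False
  have "{x :: real \<times> real. norm x \<le> a} = cball 0 a"
    by (auto simp: cball_def dist_norm)
  then show ?thesis
    using False unit_ball_vol_numeral(1)[of Num.One] by (simp add: emeasure_cball power2_eq_square)
qed

lemma distr_norm_lborel_plane:
  "distr (lborel :: (real \<times> real) measure) borel norm
     = density lborel (\<lambda>r. ennreal (2 * pi * r) * indicator {0<..} r)"
proof (rule measure_eqI_generator_eq_countable[where E="range atMost" and \<Omega>=UNIV
      and A="range (\<lambda>n::nat. {..real n})"])
  have "emeasure (density lborel (\<lambda>r. ennreal (2 * pi * r) * indicator {0<..} r)) {..a}
      = ennreal (if a < 0 then 0 else pi * a\<^sup>2)" for a :: real
  proof -
    have "emeasure (density lborel (\<lambda>r. ennreal (2 * pi * r) * indicator {0<..} r)) {..a}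
        = (\<integral>\<^sup>+r. ennreal (2 * pi * r) * indicator {0..a} r \<partial>lborel)"
      by (subst emeasure_density) (auto intro!: nn_integral_cong split: split_indicator)
    also have "\<dots> = ennreal (if a < 0 then 0 else pi * a\<^sup>2)"
      by (cases "a < 0")
         (auto intro!: nn_integral_FTC_Icc[where F="\<lambda>r. pi * r\<^sup>2", THEN trans] derivative_eq_intros)
    finally show ?thesis .
  qed
  moreover have "emeasure (distr (lborel :: (real \<times> real) measure) borel norm) {..a}
      = ennreal (if a < 0 then 0 else pi * a\<^sup>2)" for a :: real
    by (subst emeasure_distr) (auto simp: emeasure_lborel_norm_le[symmetric] vimage_def)
  ultimately show "emeasure (distr (lborel :: (real \<times> real) measure) borel norm) X
      = emeasure (density lborel (\<lambda>r. ennreal (2 * pi * r) * indicator {0<..} r)) X"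
    if "X \<in> range atMost" for X
    using that by auto
  show "emeasure (distr (lborel :: (real \<times> real) measure) borel norm) X \<noteq> \<infinity>"
    if "X \<in> range (\<lambda>n::nat. {..real n})" for X
    using that by (auto simp: emeasure_distr emeasure_lborel_norm_le vimage_def)
  show "(\<Union>n. {..real n}) = UNIV"
    by (auto intro: real_arch_simple)
qed (auto simp: Int_stable_def borel_eq_atMost)

lemma nn_integral_lborel_plane_radial:
  assumes [measurable]: "f \<in> borel_measurable borel"
  shows "(\<integral>\<^sup>+x. f (norm x) \<partial>(lborel :: (real \<times> real) measure))
       = (\<integral>\<^sup>+r. ennreal (2 * pi * r) * indicator {0<..} r * f r \<partial>lborel)"
proof -
  have "(\<integral>\<^sup>+x. f (norm x) \<partial>(lborel :: (real \<times> real) measure))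
      = (\<integral>\<^sup>+r. f r \<partial>distr (lborel :: (real \<times> real) measure) borel norm)"
    by (rule nn_integral_distr[symmetric]) simp_all
  then show ?thesis
    by (simp add: distr_norm_lborel_plane nn_integral_density)
qed

lemma prob_space_fading_measure: "prob_space fading_measure"
  unfolding fading_measure_def by (rule prob_space_exponential_density) simp

lemma space_fading_measure [simp]: "space fading_measure = UNIV"
  by (simp add: fading_measure_def)

lemma sets_fading_measure [simp, measurable_cong]: "sets fading_measure = sets borel"
  by (simp add: fading_measure_def)

lemma emeasure_fading_measure_greater:
  assumes "0 \<le> t"
  shows "emeasure fading_measure {t<..} = ennreal (exp (- t))"
proof -
  interpret prob_space fading_measure by (rule prob_space_fading_measure)
  have "emeasure fading_measure {..t} = ennreal (1 - exp (- t))"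
    using assms unfolding fading_measure_def
    by (subst emeasure_erlang_density) (simp_all add: erlang_CDF_def)
  moreover have "exp (- t) \<le> 1"
    using assms by simp
  ultimately have "measure fading_measure {..t} = 1 - exp (- t)"
    by (simp add: emeasure_eq_measure)
  moreover have "measure fading_measure {t<..} = 1 - measure fading_measure {..t}"
  proof -
    have "{t<..} = space fading_measure - {..t}"
      by auto
    then show ?thesis
      by (simp only:) (rule prob_compl, simp)
  qed
  ultimately show ?thesis
    by (simp add: emeasure_eq_measure)
qed

lemma nn_integral_fading_measure_exp:
  assumes "0 \<le> a"
  shows "(\<integral>\<^sup>+h. ennreal (exp (- (a * max 0 h))) \<partial>fading_measure) = ennreal (1 / (1 + a))"
proof -
  interpret exp_a: prob_space "density lborel (exponential_density (1 + a))"
    using assms by (intro prob_space_exponential_density) simp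
  have "(\<integral>\<^sup>+h. ennreal (exp (- (a * max 0 h))) \<partial>fading_measure)
      = (\<integral>\<^sup>+h. ennreal (1 / (1 + a)) * ennreal (exponential_density (1 + a) h) \<partial>lborel)"
    unfolding fading_measure_def
  proof (subst nn_integral_density; (intro nn_integral_cong)?)
    fix h :: real
    have "exp (- h) * exp (- (a * h)) = 1 / (1 + a) * ((1 + a) * exp (- ((1 + a) * h)))"
      using assms by (simp add: field_simps flip: exp_add)
    then show "ennreal (exponential_density 1 h) * ennreal (exp (- (a * max 0 h)))
        = ennreal (1 / (1 + a)) * ennreal (exponential_density (1 + a) h)"
      using assms by (simp add: exponential_density_def flip: ennreal_mult)
  qed measurable
  also have "\<dots> = ennreal (1 / (1 + a)) * emeasure (density lborel (exponential_density (1 + a))) UNIV"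
    by (simp add: nn_integral_cmult emeasure_density)
  finally show ?thesis
    using exp_a.emeasure_space_1 by simp
qed

lemma nn_integral_fading_measure_one_minus_exp:
  assumes "0 \<le> a"
  shows "(\<integral>\<^sup>+h. ennreal (1 - exp (- (a * max 0 h))) \<partial>fading_measure) = ennreal (a / (1 + a))"
proof -
  interpret fading: prob_space fading_measure
    by (rule prob_space_fading_measure)
  have "(\<integral>\<^sup>+h. ennreal (1 - exp (- (a * max 0 h))) \<partial>fading_measure)
      = (\<integral>\<^sup>+h. 1 - ennreal (exp (- (a * max 0 h))) \<partial>fading_measure)"
    by (intro nn_integral_cong) (simp add: ennreal_minus flip: ennreal_1)
  also have "\<dots> = (\<integral>\<^sup>+h. 1 \<partial>fading_measure) - (\<integral>\<^sup>+h. ennreal (exp (- (a * max 0 h))) \<partial>fading_measure)"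
    using assms by (intro nn_integral_diff) (simp_all add: nn_integral_fading_measure_exp)
  also have "\<dots> = ennreal (1 - 1 / (1 + a))"
    using assms fading.emeasure_space_1 by (simp add: nn_integral_fading_measure_exp flip: ennreal_minus)
  also have "1 - 1 / (1 + a) = a / (1 + a)"
    using assms by (simp add: field_simps)
  finally show ?thesis .
qed

section \<open>Interference of the marked controller process\<close>

lemma prob_space_mark_measure: "prob_space (mark_measure PO dB dS dC)"
  unfolding mark_measure_def
  by (intro prob_space_pair prob_space_fading_measure prob_space_measure_pmf)

lemma nn_integral_mark_pmf_transmitting:
  assumes "PO \<in> {0..1}" "dB \<in> {0..1}" "dS \<in> {0..1}" "dC \<in> {0..1}"
  shows "(\<integral>\<^sup>+mb. (if snd mb then Q else 0) \<partial>measure_pmf (mark_pmf PO dB dS dC))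
       = Q * ennreal ((1 - PO) * dB + (1 - PO) * (1 - dB) * dS + PO * dC)"
proof -
  have "(\<integral>\<^sup>+mb. (if snd mb then Q else 0) \<partial>measure_pmf (mark_pmf PO dB dS dC))
      = Q * (ennreal dC * ennreal PO + (ennreal dB + ennreal dS * ennreal (1 - dB)) * ennreal (1 - PO))"
    using assms by (simp add: mark_pmf_def mode_pmf_def tx_pmf_def algebra_simps)
  also have "\<dots> = Q * ennreal (dC * PO + (dB + dS * (1 - dB)) * (1 - PO))"
    using assms by (simp add: ennreal_mult ennreal_plus)
  finally show ?thesis
    by (simp add: algebra_simps)
qed

text \<open>The fading value is a real number; \<open>max 0\<close> makes explicit the clipping of negative
  contributions that \<^const>\<open>ennreal\<close> performs in \<^const>\<open>interference\<close>.\<close>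

definition interference_weight :: "real \<Rightarrow> real \<Rightarrow> mpoint \<Rightarrow> real" where
  "interference_weight xi alpha p =
     (if snd (fst (snd p)) then xi * max 0 (snd (snd p)) * norm (fst p) powr (- alpha) else 0)"

lemma interference_weight_nonneg: "0 \<le> xi \<Longrightarrow> 0 \<le> interference_weight xi alpha p"
  by (simp add: interference_weight_def)

lemma measurable_fading_component [measurable]:
  "(\<lambda>p :: mpoint. snd (snd p)) \<in> borel_measurable (lborel \<Otimes>\<^sub>M mark_measure PO dB dS dC)"
  unfolding mark_measure_def by measurable

lemma measurable_transmitting_component [measurable]:
  "Measurable.pred (lborel \<Otimes>\<^sub>M mark_measure PO dB dS dC) (\<lambda>p :: mpoint. snd (fst (snd p)))"
proof -
  have "(\<lambda>p :: mpoint. fst (snd p))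
      \<in> measurable (lborel \<Otimes>\<^sub>M mark_measure PO dB dS dC) (measure_pmf (mark_pmf PO dB dS dC))"
    unfolding mark_measure_def by measurable
  then have "(\<lambda>p :: mpoint. snd (fst (snd p))) \<in> measurable (lborel \<Otimes>\<^sub>M mark_measure PO dB dS dC) (count_space UNIV)"
    by (rule measurable_compose) simp
  then have "(\<lambda>p :: mpoint. snd (fst (snd p))) -` {True} \<inter> space (lborel \<Otimes>\<^sub>M mark_measure PO dB dS dC)
      \<in> sets (lborel \<Otimes>\<^sub>M mark_measure PO dB dS dC)"
    by (rule measurable_sets) simp
  then show ?thesis
    unfolding Measurable.pred_def by (simp add: vimage_def Int_def conj_commute)
qed

lemma measurable_interference_weight [measurable]:
  "interference_weight xi alpha \<in> borel_measurable (lborel \<Otimes>\<^sub>M mark_measure PO dB dS dC)"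
  unfolding interference_weight_def by measurable

lemma ennreal_mult_interference:
  assumes "0 \<le> c" "0 \<le> xi"
  shows "ennreal c * interference xi alpha S = (\<Sum>\<^sub>\<infinity>p\<in>S. ennreal (interference_weight (c * xi) alpha p))"
proof -
  have "ennreal c * (case p of (x, ((m, b), h)) \<Rightarrow> if b then ennreal (xi * h * norm x powr (- alpha)) else 0)
      = ennreal (interference_weight (c * xi) alpha p)" for p :: mpoint
  proof -
    obtain x m b h where p: "p = (x, ((m, b), h))"
      by (cases p) auto
    show ?thesis
    proof (cases "0 \<le> h")
      case False
      then have "xi * h * norm x powr (- alpha) \<le> 0"
        using assms by (intro mult_nonpos_nonneg mult_nonneg_nonpos) simp_all
      then show ?thesis
        using False by (simp add: p interference_weight_def ennreal_neg)
    qed (use assms in \<open>simp add: p interference_weight_def mult.assoc flip: ennreal_mult\<close>)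
  qed
  then show ?thesis
    unfolding interference_def infsum_ennreal_eq_SUP[symmetric] infsum_ennreal_cmult[symmetric] by simp
qed

lemma sets_intensity [simp]:
  "sets (intensity lam PO dB dS dC) = sets (lborel \<Otimes>\<^sub>M mark_measure PO dB dS dC)"
  by (simp add: intensity_def)

lemma sigma_finite_intensity: "sigma_finite_measure (intensity lam PO dB dS dC)"
proof -
  interpret sigma_finite_measure "lborel \<Otimes>\<^sub>M mark_measure PO dB dS dC"
    by (intro sigma_finite_pair_measure sigma_finite_lborel prob_space_imp_sigma_finite
        prob_space_mark_measure)
  show ?thesis
    unfolding intensity_def by (subst sigma_finite_iff_density_finite) auto
qed

lemma nn_integral_mark_measure_interference_weight:
  assumes "0 \<le> xi" and P01: "PO \<in> {0..1}" "dB \<in> {0..1}" "dS \<in> {0..1}" "dC \<in> {0..1}"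
  shows "(\<integral>\<^sup>+y. ennreal (1 - exp (- interference_weight xi alpha (x, y))) \<partial>mark_measure PO dB dS dC)
       = ennreal (xi * norm x powr (- alpha) / (1 + xi * norm x powr (- alpha))) *
         ennreal ((1 - PO) * dB + (1 - PO) * (1 - dB) * dS + PO * dC)"
proof -
  interpret fading: prob_space fading_measure
    by (rule prob_space_fading_measure)
  have "(\<lambda>y. ennreal (1 - exp (- interference_weight xi alpha (x, y))))
      \<in> borel_measurable (measure_pmf (mark_pmf PO dB dS dC) \<Otimes>\<^sub>M fading_measure)"
    using measurable_Pair2[OF measurable_interference_weight, of x] unfolding mark_measure_def by measurable
  then have "(\<integral>\<^sup>+y. ennreal (1 - exp (- interference_weight xi alpha (x, y))) \<partial>mark_measure PO dB dS dC)
      = (\<integral>\<^sup>+mb. \<integral>\<^sup>+h. ennreal (1 - exp (- interference_weight xi alpha (x, (mb, h))))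
           \<partial>fading_measure \<partial>measure_pmf (mark_pmf PO dB dS dC))"
    unfolding mark_measure_def by (subst fading.nn_integral_fst) simp_all
  also have "\<dots> = (\<integral>\<^sup>+mb. (if snd mb then ennreal (xi * norm x powr (- alpha) / (1 + xi * norm x powr (- alpha))) else 0)
      \<partial>measure_pmf (mark_pmf PO dB dS dC))"
    using assms nn_integral_fading_measure_one_minus_exp[of "xi * norm x powr (- alpha)"]
    by (intro nn_integral_cong) (simp add: interference_weight_def ac_simps)
  also have "\<dots> = ennreal (xi * norm x powr (- alpha) / (1 + xi * norm x powr (- alpha))) *
      ennreal ((1 - PO) * dB + (1 - PO) * (1 - dB) * dS + PO * dC)"
    by (rule nn_integral_mark_pmf_transmitting[OF P01])
  finally show ?thesis .
qed

lemma lam_eff_eq: "lam_eff lam PO dB dS dC = lam * ((1 - PO) * dB + (1 - PO) * (1 - dB) * dS + PO * dC)"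
  unfolding lam_eff_def lamB_def lamS_def lamC_def by (simp add: algebra_simps)

lemma nn_integral_intensity_interference_weight:
  assumes "0 \<le> lam" "0 \<le> xi"
    and P01: "PO \<in> {0..1}" "dB \<in> {0..1}" "dS \<in> {0..1}" "dC \<in> {0..1}"
  shows "(\<integral>\<^sup>+p. ennreal (1 - exp (- interference_weight xi alpha p)) \<partial>intensity lam PO dB dS dC)
       = ennreal (2 * pi * lam_eff lam PO dB dS dC) *
         (\<integral>\<^sup>+r. ennreal (xi * r powr (- alpha) / (1 + xi * r powr (- alpha)) * r) * indicator {0<..} r \<partial>lborel)"
proof -
  define pb where "pb = (1 - PO) * dB + (1 - PO) * (1 - dB) * dS + PO * dC"
  define q where "q r = xi * r powr (- alpha) / (1 + xi * r powr (- alpha))" for r :: real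
  interpret mark: prob_space "mark_measure PO dB dS dC"
    by (rule prob_space_mark_measure)
  have pb_nonneg: "0 \<le> pb"
    using P01 unfolding pb_def by (auto intro!: add_nonneg_nonneg mult_nonneg_nonneg)
  have q_nonneg: "0 \<le> q r" for r
    using assms by (simp add: q_def)
  have [measurable]: "q \<in> borel_measurable borel"
    unfolding q_def by measurable
  have "(\<integral>\<^sup>+p. ennreal (1 - exp (- interference_weight xi alpha p)) \<partial>intensity lam PO dB dS dC)
      = ennreal lam * (\<integral>\<^sup>+x. \<integral>\<^sup>+y. ennreal (1 - exp (- interference_weight xi alpha (x, y)))
          \<partial>mark_measure PO dB dS dC \<partial>lborel)"
    using mark.nn_integral_fst[of "\<lambda>p. ennreal (1 - exp (- interference_weight xi alpha p))" lborel]
    unfolding intensity_def by (simp add: nn_integral_density nn_integral_cmult)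
  also have "\<dots> = ennreal lam * ((\<integral>\<^sup>+x. ennreal (q (norm x)) \<partial>(lborel :: (real \<times> real) measure)) * ennreal pb)"
    using assms by (simp add: nn_integral_mark_measure_interference_weight nn_integral_multc q_def pb_def)
  also have "(\<integral>\<^sup>+x. ennreal (q (norm x)) \<partial>(lborel :: (real \<times> real) measure))
      = (\<integral>\<^sup>+r. ennreal (2 * pi * r) * indicator {0<..} r * ennreal (q r) \<partial>lborel)"
    by (rule nn_integral_lborel_plane_radial) measurable
  also have "\<dots> = ennreal (2 * pi) * (\<integral>\<^sup>+r. ennreal (q r * r) * indicator {0<..} r \<partial>lborel)"
  proof -
    have "ennreal (2 * pi * r) * indicator {0<..} r * ennreal (q r)
        = ennreal (2 * pi) * (ennreal (q r * r) * indicator {0<..} r)" for r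
      using q_nonneg[of r] by (cases "0 < r") (simp_all add: ac_simps flip: ennreal_mult)
    then show ?thesis
      by (subst nn_integral_cmult[symmetric]) (simp, measurable)
  qed
  also have "ennreal lam * (ennreal (2 * pi) * (\<integral>\<^sup>+r. ennreal (q r * r) * indicator {0<..} r \<partial>lborel) * ennreal pb)
      = ennreal (2 * pi * lam_eff lam PO dB dS dC) * (\<integral>\<^sup>+r. ennreal (q r * r) * indicator {0<..} r \<partial>lborel)"
    unfolding lam_eff_eq pb_def[symmetric] using assms pb_nonneg by (simp add: ennreal_mult' ac_simps)
  finally show ?thesis
    by (simp add: q_def)
qed

section \<open>Success probability of the typical link\<close>

lemma emeasure_fading_measure_exceeds:
  "emeasure fading_measure {h. t < ennreal h} = ennreal (exp_neg_ennreal t)"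
proof (cases t)
  case (real r)
  then have "{h. t < ennreal h} = {r<..}"
    by (auto simp: ennreal_less_iff)
  then show ?thesis
    using real by (simp add: emeasure_fading_measure_greater)
qed simp

lemma ennreal_less_mult_iff:
  assumes "0 < k"
  shows "Y < ennreal (k * h) \<longleftrightarrow> ennreal (1 / k) * Y < ennreal h"
proof -
  have "ennreal k * (ennreal (1 / k) * Y) = Y"
    using assms by (simp add: mult.assoc[symmetric] ennreal_mult[symmetric])
  moreover have "ennreal (k * h) = ennreal k * ennreal h"
    using assms by (simp add: ennreal_mult')
  ultimately show ?thesis
    using assms ennreal_mult_le_mult_iff[of "ennreal k" "ennreal h" "ennreal (1 / k) * Y"]
    by (metis ennreal_eq_0_iff ennreal_neq_top not_le order_less_irrefl)
qed

lemma measure_pair_fading_exceeds: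
  fixes T :: "'w \<Rightarrow> ennreal"
  assumes "prob_space M" "prob_space N" and [measurable]: "T \<in> borel_measurable M" "D \<in> sets N"
  shows "measure (M \<Otimes>\<^sub>M (N \<Otimes>\<^sub>M fading_measure))
           {w \<in> space (M \<Otimes>\<^sub>M (N \<Otimes>\<^sub>M fading_measure)). fst (snd w) \<in> D \<and> T (fst w) < ennreal (snd (snd w))}
       = measure N D * (\<integral>\<omega>. exp_neg_ennreal (T \<omega>) \<partial>M)"
    (is "measure _ ?E = _")
proof -
  interpret M: prob_space M by fact
  interpret N: prob_space N by fact
  interpret fading: prob_space fading_measure by (rule prob_space_fading_measure)
  interpret NF: prob_space "N \<Otimes>\<^sub>M fading_measure"
    by (intro prob_space_pair N.prob_space_axioms fading.prob_space_axioms)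
  have "?E \<in> sets (M \<Otimes>\<^sub>M (N \<Otimes>\<^sub>M fading_measure))"
    by measurable
  then have "emeasure (M \<Otimes>\<^sub>M (N \<Otimes>\<^sub>M fading_measure)) ?E
      = (\<integral>\<^sup>+\<omega>. emeasure (N \<Otimes>\<^sub>M fading_measure) (Pair \<omega> -` ?E) \<partial>M)"
    by (rule NF.emeasure_pair_measure_alt)
  also have "\<dots> = (\<integral>\<^sup>+\<omega>. ennreal (measure N D) * ennreal (exp_neg_ennreal (T \<omega>)) \<partial>M)"
  proof (intro nn_integral_cong)
    fix \<omega> assume "\<omega> \<in> space M"
    then have "Pair \<omega> -` ?E = D \<times> {h. T \<omega> < ennreal h}"
      using sets.sets_into_space[OF assms(4)] by (auto simp: space_pair_measure)
    moreover have "{h. T \<omega> < ennreal h} \<in> sets fading_measure"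
      using measurable_sets[of "\<lambda>h. T \<omega> < ennreal h" borel "count_space UNIV" "{True}"] by auto
    ultimately show "emeasure (N \<Otimes>\<^sub>M fading_measure) (Pair \<omega> -` ?E)
        = ennreal (measure N D) * ennreal (exp_neg_ennreal (T \<omega>))"
      by (simp add: fading.emeasure_pair_measure_Times emeasure_fading_measure_exceeds N.emeasure_eq_measure)
  qed
  also have "\<dots> = ennreal (measure N D * (\<integral>\<omega>. exp_neg_ennreal (T \<omega>) \<partial>M))"
    using exp_neg_ennreal_nonneg exp_neg_ennreal_le_1
    by (simp add: nn_integral_cmult nn_integral_eq_integral M.integrable_const_bound[where B=1]
        integral_nonneg_AE ennreal_mult)
  finally show ?thesis
    using exp_neg_ennreal_nonneg by (simp add: measure_def integral_nonneg_AE)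
qed

lemma measure_pair_fading_mark:
  assumes "prob_space M" "prob_space N" "D \<in> sets N"
  shows "measure (M \<Otimes>\<^sub>M (N \<Otimes>\<^sub>M fading_measure)) {w \<in> space (M \<Otimes>\<^sub>M (N \<Otimes>\<^sub>M fading_measure)). fst (snd w) \<in> D}
       = measure N D"
proof -
  interpret M: prob_space M by fact
  interpret N: prob_space N by fact
  interpret fading: prob_space fading_measure by (rule prob_space_fading_measure)
  interpret NF: prob_space "N \<Otimes>\<^sub>M fading_measure"
    by (intro prob_space_pair N.prob_space_axioms fading.prob_space_axioms)
  have "{w \<in> space (M \<Otimes>\<^sub>M (N \<Otimes>\<^sub>M fading_measure)). fst (snd w) \<in> D} = space M \<times> (D \<times> space fading_measure)"
    using sets.sets_into_space[OF assms(3)] by (auto simp: space_pair_measure)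
  then show ?thesis
    using assms(3) M.emeasure_space_1 fading.emeasure_space_1
    by (simp add: measure_def NF.emeasure_pair_measure_Times fading.emeasure_pair_measure_Times)
qed

lemma laplace_interference:
  assumes pp: "poisson_process M (intensity lam PO dB dS dC) P"
    and meas: "(\<lambda>\<omega>. interference xi alpha (P \<omega>)) \<in> borel_measurable M"
    and "0 \<le> lam" "0 \<le> xi" "0 \<le> c"
    and "PO \<in> {0..1}" "dB \<in> {0..1}" "dS \<in> {0..1}" "dC \<in> {0..1}"
  shows "(\<integral>\<omega>. exp_neg_ennreal (ennreal c * interference xi alpha (P \<omega>)) \<partial>M)
       = exp_neg_ennreal (ennreal (2 * pi * lam_eff lam PO dB dS dC) *
           (\<integral>\<^sup>+r. ennreal (c * xi * r powr (- alpha) / (1 + c * xi * r powr (- alpha)) * r)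
              * indicator {0<..} r \<partial>lborel))"
proof -
  have weighted: "ennreal c * interference xi alpha S
      = (\<Sum>\<^sub>\<infinity>p\<in>S. ennreal (interference_weight (c * xi) alpha p))" for S
    using assms by (simp add: ennreal_mult_interference)
  have "(\<integral>\<omega>. exp_neg_ennreal (\<Sum>\<^sub>\<infinity>p\<in>P \<omega>. ennreal (interference_weight (c * xi) alpha p)) \<partial>M)
      = exp_neg_ennreal (\<integral>\<^sup>+p. ennreal (1 - exp (- interference_weight (c * xi) alpha p)) \<partial>intensity lam PO dB dS dC)"
  proof (rule poisson_process_laplace[OF pp sigma_finite_intensity])
    have "(\<lambda>\<omega>. ennreal c * interference xi alpha (P \<omega>)) \<in> borel_measurable M"
      using meas by measurable
    then show "(\<lambda>\<omega>. \<Sum>\<^sub>\<infinity>p\<in>P \<omega>. ennreal (interference_weight (c * xi) alpha p)) \<in> borel_measurable M"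
      by (simp add: weighted)
  qed (use assms in \<open>simp_all add: interference_weight_nonneg measurable_cong_sets[OF sets_intensity refl]\<close>)
  then show ?thesis
    using assms by (simp add: weighted nn_integral_intensity_interference_weight)
qed

lemma measure_success_event:
  fixes I :: "'w \<Rightarrow> ennreal"
  assumes M: "prob_space M" and I: "I \<in> borel_measurable M"
    and "0 < xi * R" "0 \<le> gamma" "0 \<le> No"
  shows "measure (M \<Otimes>\<^sub>M mark_measure PO dB dS dC)
      {w \<in> space (M \<Otimes>\<^sub>M mark_measure PO dB dS dC). snd (fst (snd w)) \<and> fst (fst (snd w)) = phi \<and>
         ennreal (xi * snd (snd w) * R) > ennreal gamma * (ennreal No + I (fst w))}
    = measure_pmf.prob (mark_pmf PO dB dS dC) {mb. snd mb \<and> fst mb = phi} *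
      (exp (- (gamma * No) / (xi * R)) * (\<integral>\<omega>. exp_neg_ennreal (ennreal (gamma / (xi * R)) * I \<omega>) \<partial>M))"
proof -
  define k where "k = xi * R"
  define T where "T \<omega> = ennreal (1 / k) * (ennreal gamma * (ennreal No + I \<omega>))" for \<omega>
  have k: "0 < k"
    using assms by (simp add: k_def)
  have T_measurable: "T \<in> borel_measurable M"
    using I unfolding T_def by measurable
  have T_eq: "T \<omega> = ennreal (gamma * No / k) + ennreal (gamma / k) * I \<omega>" for \<omega>
    using k assms by (simp add: T_def distrib_left mult.assoc[symmetric] flip: ennreal_mult)
  have "{w \<in> space (M \<Otimes>\<^sub>M mark_measure PO dB dS dC). snd (fst (snd w)) \<and> fst (fst (snd w)) = phi \<and>
          ennreal (xi * snd (snd w) * R) > ennreal gamma * (ennreal No + I (fst w))}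
      = {w \<in> space (M \<Otimes>\<^sub>M (measure_pmf (mark_pmf PO dB dS dC) \<Otimes>\<^sub>M fading_measure)).
           fst (snd w) \<in> {mb. snd mb \<and> fst mb = phi} \<and> T (fst w) < ennreal (snd (snd w))}"
    using ennreal_less_mult_iff[OF k] by (auto simp: mark_measure_def T_def k_def ac_simps)
  then have "measure (M \<Otimes>\<^sub>M mark_measure PO dB dS dC)
      {w \<in> space (M \<Otimes>\<^sub>M mark_measure PO dB dS dC). snd (fst (snd w)) \<and> fst (fst (snd w)) = phi \<and>
         ennreal (xi * snd (snd w) * R) > ennreal gamma * (ennreal No + I (fst w))}
    = measure_pmf.prob (mark_pmf PO dB dS dC) {mb. snd mb \<and> fst mb = phi} * (\<integral>\<omega>. exp_neg_ennreal (T \<omega>) \<partial>M)"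
    unfolding mark_measure_def
    by (simp only:) (rule measure_pair_fading_exceeds[OF M prob_space_measure_pmf T_measurable], simp)
  also have "(\<integral>\<omega>. exp_neg_ennreal (T \<omega>) \<partial>M)
      = exp (- (gamma * No) / (xi * R)) * (\<integral>\<omega>. exp_neg_ennreal (ennreal (gamma / (xi * R)) * I \<omega>) \<partial>M)"
    using k assms by (simp add: T_eq exp_neg_ennreal_add k_def)
  finally show ?thesis .
qed

lemma measure_active_event:
  assumes "prob_space M"
  shows "measure (M \<Otimes>\<^sub>M mark_measure PO dB dS dC)
      {w \<in> space (M \<Otimes>\<^sub>M mark_measure PO dB dS dC). snd (fst (snd w)) \<and> fst (fst (snd w)) = phi}
    = measure_pmf.prob (mark_pmf PO dB dS dC) {mb. snd mb \<and> fst mb = phi}"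
proof -
  have "{w \<in> space (M \<Otimes>\<^sub>M mark_measure PO dB dS dC). snd (fst (snd w)) \<and> fst (fst (snd w)) = phi}
      = {w \<in> space (M \<Otimes>\<^sub>M (measure_pmf (mark_pmf PO dB dS dC) \<Otimes>\<^sub>M fading_measure)).
           fst (snd w) \<in> {mb. snd mb \<and> fst mb = phi}}"
    by (auto simp: mark_measure_def)
  then show ?thesis
    unfolding mark_measure_def
    by (simp only:) (rule measure_pair_fading_mark[OF assms prob_space_measure_pmf], simp)
qed

theorem lemma1:
  fixes M :: "'w measure" and P :: "'w \<Rightarrow> mpoint set"
    and lam PO dB dS dC xi No alpha r0 gamma :: real and phi :: access_mode
  assumes "lam > 0" and "r0 > 0" and "xi > 0" and "No \<ge> 0" and "alpha > 0" and "gamma > 0"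
    and "PO \<in> {0..1}" and "dB \<in> {0..1}" and "dS \<in> {0..1}" and "dC \<in> {0..1}"
    and "poisson_process M (intensity lam PO dB dS dC) P"
    and "(\<lambda>\<omega>. interference xi alpha (P \<omega>)) \<in> borel_measurable M"
    and "measure (M \<Otimes>\<^sub>M mark_measure PO dB dS dC)
           {w \<in> space (M \<Otimes>\<^sub>M mark_measure PO dB dS dC).
              snd (fst (snd w)) \<and> fst (fst (snd w)) = phi} \<noteq> 0"
  shows "measure (M \<Otimes>\<^sub>M mark_measure PO dB dS dC)
           {w \<in> space (M \<Otimes>\<^sub>M mark_measure PO dB dS dC).
              snd (fst (snd w)) \<and> fst (fst (snd w)) = phi \<and>
              ennreal (xi * snd (snd w) * r0 powr (- alpha))
                > ennreal gamma * (ennreal No + interference xi alpha (P (fst w)))}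
         / measure (M \<Otimes>\<^sub>M mark_measure PO dB dS dC)
           {w \<in> space (M \<Otimes>\<^sub>M mark_measure PO dB dS dC).
              snd (fst (snd w)) \<and> fst (fst (snd w)) = phi}
       = exp (- (gamma * No) / (xi * r0 powr (- alpha))) *
         (let J = ennreal (2 * pi * lam_eff lam PO dB dS dC) *
                  (\<integral>\<^sup>+ r. ennreal (gamma * r powr (- alpha) / (r0 powr (- alpha) + gamma * r powr (- alpha)) * r)
                          * indicator {0<..} r \<partial>lborel)
          in if J = \<infinity> then 0 else exp (- enn2real J))"
proof -
  define c where "c = gamma / (xi * r0 powr (- alpha))"
  have M: "prob_space M"
    using assms(11) by (rule poisson_process_prob_space)
  have integrand: "c * xi * r powr (- alpha) / (1 + c * xi * r powr (- alpha))
      = gamma * r powr (- alpha) / (r0 powr (- alpha) + gamma * r powr (- alpha))" for r :: real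
    using assms(2,3) by (simp add: c_def field_simps)
  have "(\<integral>\<omega>. exp_neg_ennreal (ennreal c * interference xi alpha (P \<omega>)) \<partial>M)
      = exp_neg_ennreal (ennreal (2 * pi * lam_eff lam PO dB dS dC) *
          (\<integral>\<^sup>+ r. ennreal (gamma * r powr (- alpha) / (r0 powr (- alpha) + gamma * r powr (- alpha)) * r)
             * indicator {0<..} r \<partial>lborel))"
    using laplace_interference[OF assms(11,12), of c] assms(1-10)
    unfolding integrand by (simp add: c_def)
  then show ?thesis
    using assms(13) measure_success_event[OF M assms(12), of xi "r0 powr (- alpha)" gamma No]
      measure_active_event[OF M] assms(2,3,4,6)
    by (simp add: c_def Let_def exp_neg_ennreal_def)
qed

end
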